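(* Let $p$ be a prime, $S$ a ring of characteristic $p$, and $S[y]$ the polynomial ring in one variable over $S$. For every $f\in S[y]$, writing $f'$ for its formal derivative, $(f')^pS[y]\subset S[y^p,f]$. *)

theory Defs
  imports "HOL-Computational_Algebra.Polynomial"
begin

inductive_set poly_subalg :: "'a::comm_ring_1 poly set \<Rightarrow> 'a poly set"
  for G :: "'a poly set" where
  const: "[:c:] \<in> poly_subalg G"
| gen: "g \<in> G \<Longrightarrow> g \<in> poly_subalg G"
| add: "a \<in> poly_subalg G \<Longrightarrow> b \<in> poly_subalg G \<Longrightarrow> a + b \<in> poly_subalg G"
| mult: "a \<in> poly_subalg G \<Longrightarrow> b \<in> poly_subalg G \<Longrightarrow> a * b \<in> poly_subalg G"

text \<open>Formal derivative over an arbitrary commutative ring (the library's pderiv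
requires no zero divisors): f' = sum of (i+1) a_(i+1) y^i.\<close>

definition formal_deriv :: "'a::comm_ring_1 poly \<Rightarrow> 'a poly" where
  "formal_deriv f = (\<Sum>i\<le>degree f. monom (of_nat (Suc i) * coeff f (Suc i)) i)"

end

theory Submission
  imports Defs "HOL-Computational_Algebra.Primes"
begin

text \<open>Work in \<open>S[y][x]\<close> and let \<open>\<tau>\<close> be the \<open>S[y]\<close>-linear functional reading off the
coefficient of \<open>x ^ (p - 1)\<close> modulo \<open>x ^ p - y ^ p = (x - y) ^ p\<close>. It kills multiples of
\<open>(x - y) ^ p\<close>, hence \<open>\<tau> (G * (x - y) ^ (p - 1)) = G(y)\<close>. Writing
\<open>f(x) - f(y) = (x - y) * W\<close> with \<open>W(y) = f'(y)\<close>, this gives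
\<open>\<tau> (g(x) * f'(x) * (f(x) - f(y)) ^ (p - 1)) = f' ^ p * g\<close>. On the other hand the
\<open>x\<close>-coefficients of this polynomial are polynomials in \<open>f\<close> over \<open>S\<close>, and \<open>\<tau>\<close> combines
them with powers of \<open>y ^ p\<close> only.\<close>

lemma coeff_formal_deriv: "coeff (formal_deriv f) i = of_nat (Suc i) * coeff f (Suc i)"
proof -
  have "coeff (formal_deriv f) i =
      (\<Sum>j\<le>degree f. if j = i then of_nat (Suc j) * coeff f (Suc j) else 0)"
    unfolding formal_deriv_def coeff_sum by (intro sum.cong) (auto simp: coeff_monom)
  also have "\<dots> = of_nat (Suc i) * coeff f (Suc i)"
    by (auto simp: coeff_eq_0)
  finally show ?thesis .
qed

lemma formal_deriv_0 [simp]: "formal_deriv 0 = 0"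
  by (simp add: formal_deriv_def)

lemma formal_deriv_pCons: "formal_deriv (pCons a f) = f + pCons 0 (formal_deriv f)"
  by (rule poly_eqI) (auto simp: coeff_formal_deriv coeff_pCons algebra_simps split: nat.splits)

lemma formal_deriv_map_poly_const:
  "formal_deriv (map_poly (\<lambda>x. [:x:]) f) = map_poly (\<lambda>x. [:x:]) (formal_deriv f)"
  by (rule poly_eqI) (simp add: coeff_formal_deriv coeff_map_poly of_nat_poly)

lemma poly_map_poly_const_x [simp]:
  "poly (map_poly (\<lambda>x. [:x:]) f) [:0, 1:] = (f :: 'a::comm_semiring_1 poly)"
  by (simp flip: pcompose_altdef)

lemma poly_synthetic_div_eq_formal_deriv:
  "poly (synthetic_div f a) a = poly (formal_deriv f) a"
  by (induction f) (simp_all add: formal_deriv_pCons)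

lemma linear_power_prime_CHAR:
  fixes a :: "'a::comm_ring_1"
  assumes "prime p" "CHAR('a) = p"
  shows "[:-a, 1:] ^ p = [:0, 1:] ^ p - [:a ^ p:]"
proof -
  have char: "CHAR('a poly) = p" and "prime CHAR('a poly)"
    using assms by simp_all
  have "[:-a, 1:] ^ p = ([:0, 1:] + - [:a:]) ^ p"
    by simp
  also have "\<dots> = [:0, 1:] ^ p + (- [:a:]) ^ p"
    by (rule freshmans_dream) (use \<open>prime CHAR('a poly)\<close> char in simp_all)
  also have "(- [:a:]) ^ p = - [:a ^ p:]"
    using minus_power_prime_CHAR[OF assms(2)[symmetric] assms(1), of a] by (simp add: poly_const_pow)
  finally show ?thesis
    by simp
qed

text \<open>For \<open>p > 0\<close>, \<open>top_coeff_mod p c R\<close> is the coefficient of \<open>x ^ (p - 1)\<close> in the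
remainder of \<open>R\<close> modulo \<open>x ^ p - c\<close>, because \<open>x ^ (p * q + r) \<equiv> c ^ q * x ^ r\<close>.\<close>

definition top_coeff_mod :: "nat \<Rightarrow> 'a::comm_ring_1 \<Rightarrow> 'a poly \<Rightarrow> 'a" where
  "top_coeff_mod p c R =
    (\<Sum>i\<le>degree R. coeff R i * (if i mod p = p - 1 then c ^ (i div p) else 0))"

lemma top_coeff_mod_bound:
  assumes "degree R \<le> N"
  shows "top_coeff_mod p c R =
    (\<Sum>i\<le>N. coeff R i * (if i mod p = p - 1 then c ^ (i div p) else 0))"
  unfolding top_coeff_mod_def
  by (rule sum.mono_neutral_left) (use assms in \<open>auto simp: coeff_eq_0\<close>)

lemma top_coeff_mod_0 [simp]: "top_coeff_mod p c 0 = 0"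
  by (simp add: top_coeff_mod_def)

lemma top_coeff_mod_add: "top_coeff_mod p c (R + S) = top_coeff_mod p c R + top_coeff_mod p c S"
proof -
  define N where "N = max (degree R) (degree S)"
  have "degree (R + S) \<le> N"
    unfolding N_def by (rule degree_add_le) auto
  then show ?thesis
    using top_coeff_mod_bound[of R N] top_coeff_mod_bound[of S N]
    by (simp add: top_coeff_mod_bound[of "R + S" N] distrib_right sum.distrib N_def)
qed

lemma top_coeff_mod_smult: "top_coeff_mod p c (smult b R) = b * top_coeff_mod p c R"
  unfolding top_coeff_mod_bound[OF degree_smult_le]
  by (simp add: top_coeff_mod_def sum_distrib_left mult.assoc)

lemma top_coeff_mod_diff: "top_coeff_mod p c (R - S) = top_coeff_mod p c R - top_coeff_mod p c S"
  using top_coeff_mod_add[of p c R "- S"] top_coeff_mod_smult[of p c "- 1" S] by simp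

lemma top_coeff_mod_sum: "top_coeff_mod p c (\<Sum>i\<in>A. R i) = (\<Sum>i\<in>A. top_coeff_mod p c (R i))"
  by (induction A rule: infinite_finite_induct) (simp_all add: top_coeff_mod_add)

lemma top_coeff_mod_monom:
  "top_coeff_mod p c (monom b m) = b * (if m mod p = p - 1 then c ^ (m div p) else 0)"
  unfolding top_coeff_mod_bound[OF degree_monom_le]
  by (simp add: if_distrib[of "\<lambda>x. x * _"] cong: if_cong)

lemma top_coeff_mod_mult_x_power:
  assumes "p > 0"
  shows "top_coeff_mod p c (R * [:0, 1:] ^ p) = c * top_coeff_mod p c R"
proof -
  have "R * [:0, 1:] ^ p = (\<Sum>i\<le>degree R. monom (coeff R i) (i + p))"
    by (subst (1) poly_as_sum_of_monoms[symmetric])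
      (simp add: monom_altdef[of 1 p, simplified, symmetric] sum_distrib_right mult_monom)
  then have "top_coeff_mod p c (R * [:0, 1:] ^ p) =
      (\<Sum>i\<le>degree R. coeff R i * (if i mod p = p - 1 then c ^ Suc (i div p) else 0))"
    using assms by (simp add: top_coeff_mod_sum top_coeff_mod_monom cong: if_cong)
  also have "\<dots> = c * top_coeff_mod p c R"
    unfolding top_coeff_mod_def sum_distrib_left by (intro sum.cong) auto
  finally show ?thesis .
qed

lemma top_coeff_mod_mult_x_power_minus_const:
  assumes "p > 0"
  shows "top_coeff_mod p c (R * ([:0, 1:] ^ p - [:c:])) = 0"
  using assms by (simp add: right_diff_distrib top_coeff_mod_diff top_coeff_mod_smult
      top_coeff_mod_mult_x_power)

lemma top_coeff_mod_linear_power: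
  assumes "p > 0"
  shows "top_coeff_mod p c ([:-a, 1:] ^ (p - 1)) = 1"
proof -
  have "top_coeff_mod p c ([:-a, 1:] ^ (p - 1)) =
      (\<Sum>i\<le>p - 1. if i = p - 1 then coeff ([:-a, 1:] ^ (p - 1)) i else 0)"
    unfolding top_coeff_mod_def degree_linear_power
    by (intro sum.cong) (use assms in auto)
  then show ?thesis
    by (simp add: coeff_linear_power)
qed

lemma top_coeff_mod_mult_linear_power:
  fixes a :: "'a::comm_ring_1"
  assumes "prime p" "CHAR('a) = p"
  shows "top_coeff_mod p (a ^ p) (R * [:-a, 1:] ^ (p - 1)) = poly R a"
proof (induction R)
  case (pCons b R)
  define L where "L = [:-a, 1:]"
  have "p > 0"
    using prime_gt_0_nat[OF assms(1)] .
  have "pCons b R = [:b:] + (L + [:a:]) * R"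
    by (simp add: L_def)
  then have "pCons b R * L ^ (p - 1) =
      smult b (L ^ (p - 1)) + smult a (R * L ^ (p - 1)) + R * (L ^ (p - 1) * L)"
    by (simp add: algebra_simps)
  also have "L ^ (p - 1) * L = [:0, 1:] ^ p - [:a ^ p:]"
    using linear_power_prime_CHAR[OF assms, of a] \<open>p > 0\<close>
    by (simp add: L_def power_eq_if[of _ p])
  finally have "top_coeff_mod p (a ^ p) (pCons b R * L ^ (p - 1)) =
      b * top_coeff_mod p (a ^ p) (L ^ (p - 1)) + a * top_coeff_mod p (a ^ p) (R * L ^ (p - 1))"
    using top_coeff_mod_mult_x_power_minus_const[OF \<open>p > 0\<close>, of "a ^ p" R]
    by (simp only: top_coeff_mod_add top_coeff_mod_smult add_0_right)
  then show ?case
    using top_coeff_mod_linear_power[OF \<open>p > 0\<close>, of "a ^ p" a] pCons.IH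
    by (simp add: L_def)
qed simp

lemma top_coeff_mod_mult_taylor:
  fixes a :: "'a::comm_ring_1"
  assumes "prime p" "CHAR('a) = p"
  shows "top_coeff_mod p (a ^ p) (R * (P - [:poly P a:]) ^ (p - 1)) =
    poly R a * poly (formal_deriv P) a ^ (p - 1)"
proof -
  have "P - [:poly P a:] = [:-a, 1:] * synthetic_div P a"
    using synthetic_div_correct'[of a P] by (simp add: algebra_simps)
  then have "R * (P - [:poly P a:]) ^ (p - 1) =
      (R * synthetic_div P a ^ (p - 1)) * [:-a, 1:] ^ (p - 1)"
    by (simp only: power_mult_distrib mult_ac)
  then show ?thesis
    using top_coeff_mod_mult_linear_power[OF assms, of a "R * synthetic_div P a ^ (p - 1)"]
    by (simp add: poly_synthetic_div_eq_formal_deriv)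
qed

lemma poly_subalg_0: "0 \<in> poly_subalg G"
  using poly_subalg.const[of 0 G] by simp

lemma poly_subalg_1: "1 \<in> poly_subalg G"
  using poly_subalg.const[of 1 G] by (simp add: one_pCons)

lemma poly_subalg_diff:
  "a \<in> poly_subalg G \<Longrightarrow> b \<in> poly_subalg G \<Longrightarrow> a - b \<in> poly_subalg G"
  using poly_subalg.add[OF _ poly_subalg.mult[OF poly_subalg.const[of "- 1"]], of a G b]
  by simp

lemma poly_subalg_power: "a \<in> poly_subalg G \<Longrightarrow> a ^ n \<in> poly_subalg G"
  by (induction n) (simp_all add: poly_subalg_1 poly_subalg.mult)

lemma poly_subalg_sum:
  "(\<And>i. i \<in> A \<Longrightarrow> a i \<in> poly_subalg G) \<Longrightarrow> (\<Sum>i\<in>A. a i) \<in> poly_subalg G"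
  by (induction A rule: infinite_finite_induct) (simp_all add: poly_subalg_0 poly_subalg.add)

lemma coeff_mult_in_poly_subalg:
  assumes "\<And>i. coeff P i \<in> poly_subalg G" "\<And>i. coeff Q i \<in> poly_subalg G"
  shows "coeff (P * Q) n \<in> poly_subalg G"
  unfolding coeff_mult by (intro poly_subalg_sum poly_subalg.mult assms)

lemma coeff_power_in_poly_subalg:
  assumes "\<And>i. coeff P i \<in> poly_subalg G"
  shows "coeff (P ^ m) n \<in> poly_subalg G"
proof (induction m arbitrary: n)
  case 0
  show ?case
    by (simp add: coeff_1 poly_subalg_0 poly_subalg_1)
next
  case (Suc m)
  then show ?case
    by (simp add: coeff_mult_in_poly_subalg assms)
qed

lemma coeff_map_poly_const_in_poly_subalg:
  "coeff (map_poly (\<lambda>x. [:x:]) q) i \<in> poly_subalg G"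
  by (simp add: coeff_map_poly poly_subalg.const)

lemma top_coeff_mod_in_poly_subalg:
  assumes "c \<in> poly_subalg G" "\<And>i. coeff R i \<in> poly_subalg G"
  shows "top_coeff_mod p c R \<in> poly_subalg G"
  unfolding top_coeff_mod_def
  by (intro poly_subalg_sum poly_subalg.mult assms) (simp add: poly_subalg_0 poly_subalg_power assms)

theorem theorem6p10:
  fixes f g :: "'a::comm_ring_1 poly" and p :: nat
  assumes "prime (p::nat)" and "CHAR('a) = p"
  shows "(formal_deriv f) ^ p * g \<in> poly_subalg {[:0, 1:] ^ p, f}"
proof -
  define lift :: "'a poly \<Rightarrow> 'a poly poly" where "lift = map_poly (\<lambda>x. [:x:])"
  define R where "R = lift g * lift (formal_deriv f) * (lift f - [:f:]) ^ (p - 1)"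
  have "p > 0"
    using prime_gt_0_nat[OF assms(1)] .
  have "top_coeff_mod p ([:0, 1:] ^ p) R = g * formal_deriv f * formal_deriv f ^ (p - 1)"
    using top_coeff_mod_mult_taylor[of p "[:0, 1:]" "lift g * lift (formal_deriv f)" "lift f"] assms
    by (simp add: R_def lift_def formal_deriv_map_poly_const)
  also have "\<dots> = formal_deriv f ^ p * g"
    using \<open>p > 0\<close> by (simp add: power_eq_if[of _ p] algebra_simps)
  finally have "top_coeff_mod p ([:0, 1:] ^ p) R = formal_deriv f ^ p * g" .
  moreover have "top_coeff_mod p ([:0, 1:] ^ p) R \<in> poly_subalg {[:0, 1:] ^ p, f}"
  proof (rule top_coeff_mod_in_poly_subalg)
    show "[:0, 1:] ^ p \<in> poly_subalg {[:0, 1:] ^ p, f}"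
      by (simp add: poly_subalg.gen)
    have coeff_lift: "coeff (lift q) i \<in> poly_subalg {[:0, 1:] ^ p, f}" for q i
      unfolding lift_def by (rule coeff_map_poly_const_in_poly_subalg)
    have "coeff (lift f - [:f:]) i \<in> poly_subalg {[:0, 1:] ^ p, f}" for i
      unfolding coeff_diff
      by (intro poly_subalg_diff coeff_lift) (simp add: coeff_pCons' poly_subalg.gen poly_subalg_0)
    then show "coeff R i \<in> poly_subalg {[:0, 1:] ^ p, f}" for i
      unfolding R_def by (intro coeff_mult_in_poly_subalg coeff_power_in_poly_subalg coeff_lift)
  qed
  ultimately show ?thesis
    by simp
qed

end
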